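(* Let $d$ be a positive integer with $d \notin \{1, 3\}$, let $\mathbb{F}$ be a field, let $D_1 = \mathbb{F}((T))$, and let $D_2$ be a subring of $\overline{\mathbb{F}}^{\mathrm{alg}}((T))$. Consider the game of degree $d$ in which Nora and Wanda choose the polynomial coefficients from $D_1$. If Nora makes the last move, she can ensure that the final polynomial has no root in $D_2$.
   Context: $\mathbb{F}((T))$ denotes the field of formal Laurent series in the variable $T$ with coefficients in $\mathbb{F}$, and $\overline{\mathbb{F}}^{\mathrm{alg}}$ an algebraic closure of $\mathbb{F}$. The game: Nora and Wanda alternately choose coefficients of $f(x) = a_d x^d + \cdots + a_0$; on each move the current player picks a not-yet-chosen coefficient and assigns it a value in $D_1$, subject to $a_d \neq 0$, $a_0 \neq 0$. *)

theory Defs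
  imports "HOL-Algebra.Algebraic_Closure_Type" "HOL-Computational_Algebra.Formal_Laurent_Series"
    "HOL-Computational_Algebra.Polynomial"
begin

lift_definition fls_map_ac :: "'a::field fls \<Rightarrow> 'a alg_closure fls"
  is "\<lambda>f n. to_ac (f n)" by simp

definition is_subring :: "'a::comm_ring_1 set \<Rightarrow> bool" where
  "is_subring S \<longleftrightarrow> 0 \<in> S \<and> 1 \<in> S \<and>
     (\<forall>x\<in>S. \<forall>y\<in>S. x + y \<in> S \<and> x * y \<in> S) \<and> (\<forall>x\<in>S. - x \<in> S)"

(* A game position: c i = None means coefficient a_i not yet chosen;
   c i = Some v means a_i has been set to v.  Only indices i \<le> d matter. *)
definition finished :: "nat \<Rightarrow> (nat \<Rightarrow> 'a option) \<Rightarrow> bool" where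
  "finished d c \<longleftrightarrow> (\<forall>i\<le>d. c i \<noteq> None)"

definition legal_move :: "nat \<Rightarrow> (nat \<Rightarrow> 'a::zero option) \<Rightarrow> nat \<Rightarrow> 'a \<Rightarrow> bool" where
  "legal_move d c i v \<longleftrightarrow> i \<le> d \<and> c i = None \<and> ((i = 0 \<or> i = d) \<longrightarrow> v \<noteq> 0)"

definition final_poly :: "nat \<Rightarrow> (nat \<Rightarrow> 'a::zero option) \<Rightarrow> 'a poly" where
  "final_poly d c = Poly (map (\<lambda>i. the (c i)) [0..<Suc d])"

(* nora_wins d Goal nora_to_move c: from position c, with Nora to move iff
   nora_to_move, Nora has a strategy guaranteeing that the final polynomial
   satisfies Goal. (The game is finite, so the inductive definition is the
   standard backward-induction notion of a winning position.) *)
inductive nora_wins :: "nat \<Rightarrow> ('a::zero poly \<Rightarrow> bool) \<Rightarrow> bool \<Rightarrow> (nat \<Rightarrow> 'a option) \<Rightarrow> bool"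
  for d Goal where
  game_over: "finished d c \<Longrightarrow> Goal (final_poly d c) \<Longrightarrow> nora_wins d Goal b c"
| nora_move: "\<not> finished d c \<Longrightarrow> legal_move d c i v \<Longrightarrow> nora_wins d Goal False (c(i := Some v))
         \<Longrightarrow> nora_wins d Goal True c"
| wanda_move: "\<not> finished d c \<Longrightarrow> (\<And>i v. legal_move d c i v \<Longrightarrow> nora_wins d Goal True (c(i := Some v)))
         \<Longrightarrow> nora_wins d Goal False c"

(* the game has d+1 moves; the player moving first also moves last iff d+1 is odd *)
definition nora_moves_last :: "nat \<Rightarrow> bool \<Rightarrow> bool" where
  "nora_moves_last d nora_first \<longleftrightarrow> (nora_first \<longleftrightarrow> odd (d + 1))"

end

(*
  Nora keeps the decisive coefficient for her last move. When only a_i is still free, she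
  gives it valuation -N for a huge N such that i does not divide N + v(a_0) and d - i does
  not divide N + v(a_d). The Newton polygon of the final polynomial then consists of the
  edges from (0, v(a_0)) to (i, -N) to (d, v(a_d)), neither of integral slope, so for every
  nonzero x in Fbar((T)) a single term a_k x^k has least valuation and f(x) is nonzero. Such an N exists unless i or d - i equals 1, or
  d = 4, i = 2 and v(a_0) - v(a_4) is odd, in which case a_2 = 0 works provided
  a_1 = a_3 = 0. Nora sets these critical coefficients to 0 on her earlier moves; a parity
  count shows that she has enough moves for this, as Wanda's moves never increase the
  number of free critical indices.
*)

theory Submission
  imports Defs
begin

section \<open>Valuation-separated polynomials over Laurent series\<close>

lemma fls_map_ac_nth [simp]: "fls_nth (fls_map_ac f) n = to_ac (fls_nth f n)"
  by (simp add: fls_map_ac.rep_eq)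

lemma fls_map_ac_eq_0_iff [simp]: "fls_map_ac f = 0 \<longleftrightarrow> f = 0"
  by (metis fls_map_ac_nth fls_nonzero_nth fls_zero_nth to_ac_0 to_ac_eq_iff)

lemma fls_map_ac_0 [simp]: "fls_map_ac 0 = 0"
  by simp

lemma fls_subdegree_map_ac [simp]: "fls_subdegree (fls_map_ac f) = fls_subdegree f"
  by (cases "f = 0") (auto intro: fls_subdegree_eqI)

lemma coeff_map_poly_fls_map_ac [simp]:
  "coeff (map_poly fls_map_ac p) j = fls_map_ac (coeff p j)"
  by (simp add: coeff_map_poly)

lemma poly_fls_nonzero_if_strict_min_term:
  fixes p :: "'a::field fls poly"
  assumes "x \<noteq> 0" and "coeff p k \<noteq> 0"
    and min: "\<And>j. j \<noteq> k \<Longrightarrow> coeff p j \<noteq> 0 \<Longrightarrow>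
      fls_subdegree (coeff p k) + int k * fls_subdegree x < fls_subdegree (coeff p j) + int j * fls_subdegree x"
  shows "poly p x \<noteq> 0"
proof
  assume root: "poly p x = 0"
  define s where "s = fls_subdegree (coeff p k) + int k * fls_subdegree x"
  have subdegree_term: "fls_subdegree (coeff p j * x ^ j) = fls_subdegree (coeff p j) + int j * fls_subdegree x"
    if "coeff p j \<noteq> 0" for j
    using that \<open>x \<noteq> 0\<close> by (simp add: fls_subdegree_pow)
  have other_terms: "fls_nth (coeff p j * x ^ j) s = 0" if "j \<noteq> k" for j
    using min[OF that] subdegree_term unfolding s_def by (cases "coeff p j = 0") auto
  have "fls_nth (poly p x) s = (\<Sum>j\<le>degree p. fls_nth (coeff p j * x ^ j) s)"
    by (simp add: poly_altdef fls_nth_sum)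
  also have "\<dots> = (\<Sum>j\<le>degree p. if j = k then fls_nth (coeff p k * x ^ k) s else 0)"
    using other_terms by (intro sum.cong) auto
  also have "\<dots> = fls_nth (coeff p k * x ^ k) s"
    using \<open>coeff p k \<noteq> 0\<close> by (simp add: le_degree)
  also have "\<dots> \<noteq> 0"
    using subdegree_term[OF \<open>coeff p k \<noteq> 0\<close>] \<open>coeff p k \<noteq> 0\<close> \<open>x \<noteq> 0\<close> unfolding s_def
    by (metis mult_eq_0_iff nth_fls_subdegree_nonzero power_eq_0_iff)
  finally show False using root by simp
qed

(* Equivalently: no edge of the Newton polygon of p has integral slope. *)
definition valuation_separated :: "'a::field fls poly \<Rightarrow> bool" where
  "valuation_separated p \<longleftrightarrow> (\<forall>m::int. \<exists>k. coeff p k \<noteq> 0 \<and> (\<forall>j. j \<noteq> k \<longrightarrow> coeff p j \<noteq> 0 \<longrightarrow>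
     fls_subdegree (coeff p k) + int k * m < fls_subdegree (coeff p j) + int j * m))"

lemma poly_nonzero_if_valuation_separated:
  fixes p :: "'a::field fls poly"
  assumes "valuation_separated p" and "x \<noteq> 0"
  shows "poly p x \<noteq> 0"
proof -
  obtain k where "coeff p k \<noteq> 0" and "\<forall>j. j \<noteq> k \<longrightarrow> coeff p j \<noteq> 0 \<longrightarrow>
      fls_subdegree (coeff p k) + int k * fls_subdegree x < fls_subdegree (coeff p j) + int j * fls_subdegree x"
    using assms(1) unfolding valuation_separated_def by blast
  then show ?thesis
    using \<open>x \<noteq> 0\<close> by (intro poly_fls_nonzero_if_strict_min_term) auto
qed

lemma valuation_separated_map_ac [simp]:
  "valuation_separated (map_poly fls_map_ac p) \<longleftrightarrow> valuation_separated p"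
  by (simp add: valuation_separated_def)

lemma poly_map_ac_nonzero_if_valuation_separated:
  fixes p :: "'a::field fls poly"
  assumes "valuation_separated p" and "coeff p 0 \<noteq> 0"
  shows "poly (map_poly fls_map_ac p) x \<noteq> 0"
proof (cases "x = 0")
  case True
  then show ?thesis
    using assms(2) by (simp add: poly_0_coeff_0)
next
  case False
  then show ?thesis
    using assms(1) by (simp add: poly_nonzero_if_valuation_separated)
qed

section \<open>Choosing the last coefficient\<close>

lemma min_weight_lt_above_chord:
  fixes v :: "nat \<Rightarrow> int"
  assumes "a < j" "j < b"
    and above: "(int b - int a) * v j > (int b - int j) * v a + (int j - int a) * v b"
  shows "min (v a + int a * m) (v b + int b * m) < v j + int j * m"
proof -
  define \<mu> where "\<mu> = min (v a + int a * m) (v b + int b * m)"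
  have "(int b - int a) * \<mu> = (int b - int j) * \<mu> + (int j - int a) * \<mu>"
    by (simp add: algebra_simps)
  also have "\<dots> \<le> (int b - int j) * (v a + int a * m) + (int j - int a) * (v b + int b * m)"
    using assms(1,2) unfolding \<mu>_def by (intro add_mono mult_left_mono) auto
  also have "\<dots> = (int b - int j) * v a + (int j - int a) * v b + (int b - int a) * (int j * m)"
    by (simp add: algebra_simps)
  also have "\<dots> < (int b - int a) * (v j + int j * m)"
    using above by (simp add: algebra_simps)
  finally show ?thesis
    using assms(1,2) unfolding \<mu>_def by (simp add: mult_less_cancel_left_pos)
qed

lemma strict_min_on_triangle:
  fixes f :: "nat \<Rightarrow> int" and J :: "nat set"
  assumes J: "J \<subseteq> {..d}" "0 \<in> J" "i \<in> J" "d \<in> J"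
    and f_0_i: "0 < i \<Longrightarrow> f 0 \<noteq> f i" and f_i_d: "i < d \<Longrightarrow> f i \<noteq> f d"
    and f_i_below: "0 < i \<Longrightarrow> i < d \<Longrightarrow> f i < max (f 0) (f d)"
    and f_left: "\<And>j. j \<in> J \<Longrightarrow> 0 < j \<Longrightarrow> j < i \<Longrightarrow> min (f 0) (f i) < f j"
    and f_right: "\<And>j. j \<in> J \<Longrightarrow> i < j \<Longrightarrow> j < d \<Longrightarrow> min (f i) (f d) < f j"
  shows "\<exists>k\<in>J. \<forall>j\<in>J - {k}. f k < f j"
proof -
  have "i \<le> d" using J by auto
  have "Min (f ` {0, i, d}) \<in> f ` {0, i, d}"
    by (rule Min_in) auto
  then obtain k where k: "k \<in> {0, i, d}" "f k = Min (f ` {0, i, d})"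
    by (metis imageE)
  have k_min: "f k \<le> f 0" "f k \<le> f i" "f k \<le> f d"
    unfolding k(2) by (intro Min_le; simp)+
  have "f k < f j" if j: "j \<in> J - {k}" for j
  proof (cases "j \<in> {0, i, d}")
    case True
    then show ?thesis using k(1) j k_min f_0_i f_i_d f_i_below \<open>i \<le> d\<close>
      by (cases "0 < i \<and> i < d") (auto simp: max_def split: if_splits)
  next
    case False
    then have "0 < j" "j < d" "j \<noteq> i" using j J by auto
    then show ?thesis using f_left f_right k_min j
      by (cases "j < i") (fastforce simp: min_def split: if_splits)+
  qed
  then show ?thesis
    using k(1) J by blast
qed

lemma bounded_above_dominant_chord:
  fixes x y \<alpha> \<beta> M N :: int
  assumes "0 \<le> \<alpha>" "1 \<le> \<beta>" "\<alpha> + \<beta> \<le> d" "\<bar>x\<bar> \<le> M" "\<bar>y\<bar> \<le> M" "2 * d * M < N"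
  shows "\<alpha> * y - \<beta> * N < (\<alpha> + \<beta>) * x"
proof -
  have x: "\<bar>(\<alpha> + \<beta>) * x\<bar> \<le> d * M"
    using assms(1-4) by (auto simp: abs_mult intro!: mult_mono)
  have y: "\<bar>\<alpha> * y\<bar> \<le> d * M"
    using assms(1-3,5) by (auto simp: abs_mult intro!: mult_mono)
  have "N \<le> \<beta> * N"
    using assms(2,6) x mult_right_mono[of 1 \<beta> N] by simp
  then show ?thesis
    using abs_le_D1[OF y] abs_le_D2[OF x] assms(6) by linarith
qed

lemma strict_min_weight_at_dominant_index:
  fixes v :: "nat \<Rightarrow> int" and J :: "nat set" and N M m :: int
  assumes J: "J \<subseteq> {..d}" "0 \<in> J" "i \<in> J" "d \<in> J"
    and vi: "v i = - N" and bound: "\<And>j. j \<in> J \<Longrightarrow> j \<noteq> i \<Longrightarrow> \<bar>v j\<bar> \<le> M"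
    and N: "2 * int d * M < N"
    and ndvd_0: "0 < i \<Longrightarrow> \<not> int i dvd N + v 0"
    and ndvd_d: "i < d \<Longrightarrow> \<not> int (d - i) dvd N + v d"
  shows "\<exists>k\<in>J. \<forall>j\<in>J - {k}. v k + int k * m < v j + int j * m"
proof (rule strict_min_on_triangle[OF J])
  let ?f = "\<lambda>j. v j + int j * m"
  have "i \<le> d" using J by auto
  show "?f 0 \<noteq> ?f i" if "0 < i"
  proof
    assume "?f 0 = ?f i"
    then have "N + v 0 = int i * m" using vi by simp
    then show False using ndvd_0 that by simp
  qed
  show "?f i \<noteq> ?f d" if "i < d"
  proof
    assume "?f i = ?f d"
    then have "N + v d = int (d - i) * (- m)" using vi that by (simp add: of_nat_diff algebra_simps)
    then show False using ndvd_d that by simp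
  qed
  show "?f i < max (?f 0) (?f d)" if "0 < i" "i < d"
  proof -
    have b0: "\<bar>int (d - i) * v 0\<bar> \<le> int d * M" and bd: "\<bar>int i * v d\<bar> \<le> int d * M"
      using bound[of 0] bound[of d] J that by (auto simp: abs_mult intro!: mult_mono)
    then have "N \<le> int d * N"
      using N that mult_right_mono[of 1 "int d" N] by simp
    then have "- (int (d - i) * v 0) - int i * v d < int d * N"
      using abs_le_D2[OF b0] abs_le_D2[OF bd] N by linarith
    then have "(int d - int i) * - v 0 + (int i - int 0) * - v d < (int d - int 0) * - v i"
      using vi that by (simp add: of_nat_diff algebra_simps)
    then have "min (- ?f 0) (- ?f d) < - ?f i"
      using min_weight_lt_above_chord[of 0 i d "\<lambda>j. - v j" "- m"] that by simp
    then show ?thesis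
      by linarith
  qed
  show "min (?f 0) (?f i) < ?f j" if "j \<in> J" "0 < j" "j < i" for j
  proof -
    have "int (i - j) * v 0 - int j * N < int i * v j"
      using bounded_above_dominant_chord[of "int (i - j)" "int j" d "v j" M "v 0" N] bound[of j] bound[of 0] J N that \<open>i \<le> d\<close>
      by (simp add: of_nat_diff)
    then show ?thesis
      using that vi by (intro min_weight_lt_above_chord) (auto simp: of_nat_diff algebra_simps)
  qed
  show "min (?f i) (?f d) < ?f j" if "j \<in> J" "i < j" "j < d" for j
  proof -
    have "int (j - i) * v d - int (d - j) * N < int (d - i) * v j"
      using bounded_above_dominant_chord[of "int (j - i)" "int (d - j)" d "v j" M "v d" N] bound[of j] bound[of d] J N that
      by (simp add: of_nat_diff)
    then show ?thesis
      using that vi by (intro min_weight_lt_above_chord) (auto simp: of_nat_diff algebra_simps)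
  qed
qed

lemma valuation_separated_dominant_coeff:
  fixes p :: "'a::field fls poly" and N M :: int
  assumes "c \<noteq> 0" "fls_subdegree c = - N"
    and "degree p \<le> d" "i \<le> d" "coeff p i = 0"
    and "i \<noteq> 0 \<Longrightarrow> coeff p 0 \<noteq> 0" "i \<noteq> d \<Longrightarrow> coeff p d \<noteq> 0"
    and "\<And>j. \<bar>fls_subdegree (coeff p j)\<bar> \<le> M" "2 * int d * M < N"
    and "0 < i \<Longrightarrow> \<not> int i dvd N + fls_subdegree (coeff p 0)"
    and "i < d \<Longrightarrow> \<not> int (d - i) dvd N + fls_subdegree (coeff p d)"
  shows "valuation_separated (p + monom c i)"
  unfolding valuation_separated_def
proof
  fix m :: int
  let ?q = "p + monom c i"
  have coeff_q: "coeff ?q j = (if j = i then c else coeff p j)" for j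
    using \<open>coeff p i = 0\<close> by (simp add: coeff_monom)
  have support: "{j. coeff ?q j \<noteq> 0} \<subseteq> {..d}"
    using \<open>degree p \<le> d\<close> \<open>i \<le> d\<close> by (auto simp: coeff_q dest: le_degree split: if_splits)
  have "\<exists>k\<in>{j. coeff ?q j \<noteq> 0}. \<forall>j\<in>{j. coeff ?q j \<noteq> 0} - {k}.
      fls_subdegree (coeff ?q k) + int k * m < fls_subdegree (coeff ?q j) + int j * m"
    by (rule strict_min_weight_at_dominant_index[where i = i and d = d and N = N and M = M])
      (use assms support in \<open>auto simp: coeff_q\<close>)
  then show "\<exists>k. coeff ?q k \<noteq> 0 \<and> (\<forall>j. j \<noteq> k \<longrightarrow> coeff ?q j \<noteq> 0 \<longrightarrow>
      fls_subdegree (coeff ?q k) + int k * m < fls_subdegree (coeff ?q j) + int j * m)"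
    by blast
qed

lemma valuation_separated_binomial:
  fixes p :: "'a::field fls poly"
  assumes "\<And>j. j \<notin> {0, d} \<Longrightarrow> coeff p j = 0" "coeff p 0 \<noteq> 0" "coeff p d \<noteq> 0"
    and "\<not> int d dvd fls_subdegree (coeff p 0) - fls_subdegree (coeff p d)"
  shows "valuation_separated p"
  unfolding valuation_separated_def
proof
  fix m :: int
  let ?v = "\<lambda>j. fls_subdegree (coeff p j)"
  have "?v 0 \<noteq> ?v d + int d * m"
    using assms(4) by auto
  then consider "?v 0 < ?v d + int d * m" | "?v d + int d * m < ?v 0"
    by linarith
  then show "\<exists>k. coeff p k \<noteq> 0 \<and> (\<forall>j. j \<noteq> k \<longrightarrow> coeff p j \<noteq> 0 \<longrightarrow>
      ?v k + int k * m < ?v j + int j * m)"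
    by cases (use assms(1-3) in \<open>metis insertCI insertE singletonD of_nat_0 mult_zero_left add_0_right\<close>)+
qed

lemma exists_ge_not_dvd:
  fixes a C p :: int
  assumes "2 \<le> a"
  shows "\<exists>N\<ge>C. \<not> a dvd N + p"
proof -
  have "\<not> (a dvd C + p \<and> a dvd (C + 1) + p)"
  proof
    assume "a dvd C + p \<and> a dvd (C + 1) + p"
    then have "a dvd 1"
      using dvd_diff[of a "(C + 1) + p" "C + p"] by simp
    then show False
      using assms by (simp add: zdvd1_eq)
  qed
  then consider "\<not> a dvd C + p" | "\<not> a dvd (C + 1) + p"
    by blast
  then show ?thesis
    by cases (use less_add_one[of C] in \<open>auto intro: exI[of _ C] exI[of _ "C + 1"]\<close>)
qed

(* Take N + p = 1 (mod a): then N and N + s both avoid a, and one of them avoids b. *)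
lemma exists_ge_not_dvd_pair:
  fixes a b s C p q :: int
  assumes "2 \<le> a" "0 \<le> s" "\<not> a dvd s + 1" "\<not> b dvd s"
  shows "\<exists>N\<ge>C. \<not> a dvd N + p \<and> \<not> b dvd N + q"
proof -
  define N where "N = C + (1 - p - C) mod a"
  have "C \<le> N"
    using assms(1) by (simp add: N_def)
  have "a dvd (1 - p - C) - (1 - p - C) mod a"
    by (rule dvd_minus_mod)
  also have "(1 - p - C) - (1 - p - C) mod a = 1 - (N + p)"
    by (simp add: N_def)
  finally have "a dvd 1 - (N + p)" .
  then have "\<not> a dvd N + p" "\<not> a dvd (N + s) + p"
    using assms(1,3) dvd_add[of a "1 - (N + p)" "N + p"] dvd_add[of a "1 - (N + p)" "(N + s) + p"]
    by (auto simp: zdvd1_eq algebra_simps)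
  moreover have "\<not> b dvd N + q \<or> \<not> b dvd (N + s) + q"
    using assms(4) dvd_diff[of b "(N + s) + q" "N + q"] by auto
  ultimately show ?thesis
    using \<open>C \<le> N\<close> assms(2) by (metis le_add_same_cancel1 order_trans)
qed

lemma exists_ge_not_dvd_both:
  fixes a b C p q :: int
  assumes "2 \<le> a" "2 \<le> b" "5 \<le> a + b"
  shows "\<exists>N\<ge>C. \<not> a dvd N + p \<and> \<not> b dvd N + q"
proof -
  have not_dvd_succ: "\<not> x dvd x + 1" if "2 \<le> x" for x :: int
    using that by (simp add: zdvd1_eq)
  consider "\<not> b dvd a" | "\<not> a dvd b" | "a = b"
    using assms(1,2) zdvd_antisym_nonneg by fastforce
  then show ?thesis
  proof cases
    case 1
    then show ?thesis
      using exists_ge_not_dvd_pair[of a a b] not_dvd_succ assms(1) by simp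
  next
    case 2
    then show ?thesis
      using exists_ge_not_dvd_pair[of b b a C q p] not_dvd_succ assms(2) by auto
  next
    case 3
    then have "\<not> a dvd 2"
      using assms(1,3) zdvd_imp_le[of a 2] by auto
    then show ?thesis
      using exists_ge_not_dvd_pair[of a 1 b] 3 assms(1) by (simp add: zdvd1_eq)
  qed
qed

lemma exists_dominant_coeff_valuation_separated:
  fixes p :: "'a::field fls poly"
  assumes "degree p \<le> d" "i \<le> d" "coeff p i = 0"
    and "i \<noteq> 0 \<Longrightarrow> coeff p 0 \<noteq> 0" "i \<noteq> d \<Longrightarrow> coeff p d \<noteq> 0"
    and large_N: "\<And>C. \<exists>N\<ge>C. (0 < i \<longrightarrow> \<not> int i dvd N + fls_subdegree (coeff p 0)) \<and>
                          (i < d \<longrightarrow> \<not> int (d - i) dvd N + fls_subdegree (coeff p d))"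
  shows "\<exists>c. c \<noteq> 0 \<and> valuation_separated (p + monom c i)"
proof -
  define M where "M = (\<Sum>j\<le>d. \<bar>fls_subdegree (coeff p j)\<bar>)"
  have bound: "\<bar>fls_subdegree (coeff p j)\<bar> \<le> M" for j
  proof (cases "j \<le> d")
    case True
    then show ?thesis unfolding M_def by (intro member_le_sum) auto
  next
    case False
    then show ?thesis
      using \<open>degree p \<le> d\<close> unfolding M_def by (simp add: coeff_eq_0 sum_nonneg)
  qed
  obtain N where "2 * int d * M + 1 \<le> N" and N: "0 < i \<longrightarrow> \<not> int i dvd N + fls_subdegree (coeff p 0)"
    "i < d \<longrightarrow> \<not> int (d - i) dvd N + fls_subdegree (coeff p d)"
    using large_N by blast
  then have "2 * int d * M < N"
    by linarith
  obtain c :: "'a fls" where "c \<noteq> 0" "fls_subdegree c = - N"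
    using fls_X_intpow_nonzero[of "- N"] fls_subdegree_fls_X_intpow[of "- N"] by blast
  then show ?thesis
    using valuation_separated_dominant_coeff[of c N p d i M] assms bound N \<open>2 * int d * M < N\<close> by blast
qed

lemma exists_coeff_valuation_separated:
  fixes p :: "'a::field fls poly"
  assumes d: "2 \<le> d" "d \<noteq> 3" and "degree p \<le> d" "i \<le> d" "i \<noteq> 1" "i \<noteq> d - 1" "coeff p i = 0"
    and "i \<noteq> 0 \<Longrightarrow> coeff p 0 \<noteq> 0" "i \<noteq> d \<Longrightarrow> coeff p d \<noteq> 0"
    and quartic: "d = 4 \<Longrightarrow> i = 2 \<Longrightarrow> coeff p 1 = 0 \<and> coeff p 3 = 0"
  shows "\<exists>c. (i = 0 \<or> i = d \<longrightarrow> c \<noteq> 0) \<and> valuation_separated (p + monom c i)"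
proof -
  define v where "v j = fls_subdegree (coeff p j)" for j
  have dominant: "\<exists>c. (i = 0 \<or> i = d \<longrightarrow> c \<noteq> 0) \<and> valuation_separated (p + monom c i)"
    if "\<And>C. \<exists>N\<ge>C. (0 < i \<longrightarrow> \<not> int i dvd N + v 0) \<and> (i < d \<longrightarrow> \<not> int (d - i) dvd N + v d)"
    using exists_dominant_coeff_valuation_separated[of p d i] assms that unfolding v_def by blast
  consider "d = 4" "i = 2" | "i = 0" | "i = d" | "2 \<le> i" "i + 2 \<le> d" "5 \<le> d"
    using assms by linarith
  then show ?thesis
  proof cases
    case 1
    show ?thesis
    proof (cases "even (v 0 - v 4)")
      case True
      have "\<not> 2 dvd N + v 4" if "\<not> 2 dvd N + v 0" for N
        using True that dvd_add[of 2 "N + v 4" "v 0 - v 4"] by auto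
      then show ?thesis
        using 1 exists_ge_not_dvd[of 2 _ "v 0"] by (intro dominant) fastforce
    next
      case False
      \<comment> \<open>Whatever N, one edge through (2, -N) would have integral slope; take a_2 = 0.\<close>
      have "valuation_separated p"
      proof (rule valuation_separated_binomial[where d = 4])
        show "\<not> int 4 dvd fls_subdegree (coeff p 0) - fls_subdegree (coeff p 4)"
          using False dvd_trans[of "2 :: int" 4 "v 0 - v 4"] by (auto simp: v_def)
        show "coeff p j = 0" if "j \<notin> {0, 4}" for j
          using quartic 1 \<open>degree p \<le> d\<close> that \<open>coeff p i = 0\<close>
          by (cases "j \<le> 4") (auto simp: coeff_eq_0 numeral_eq_Suc le_Suc_eq)
      qed (use assms 1 in auto)
      then show ?thesis
        using 1 by (intro exI[of _ 0]) simp
    qed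
  next
    case 2
    then show ?thesis
      using exists_ge_not_dvd[of "int d" _ "v d"] d by (intro dominant) auto
  next
    case 3
    then show ?thesis
      using exists_ge_not_dvd[of "int d" _ "v 0"] d by (intro dominant) auto
  next
    case 4
    then show ?thesis
      using exists_ge_not_dvd_both[of "int i" "int (d - i)" _ "v 0" "v d"]
      by (intro dominant) (auto simp: of_nat_diff)
  qed
qed

section \<open>The game\<close>

definition free_indices :: "nat \<Rightarrow> (nat \<Rightarrow> 'a option) \<Rightarrow> nat set" where
  "free_indices d c = {i. i \<le> d \<and> c i = None}"

(* Free indices that must not be the last free one when Nora makes her final move. *)
definition critical_indices :: "nat \<Rightarrow> (nat \<Rightarrow> 'a::zero option) \<Rightarrow> nat set" where
  "critical_indices d c = {i \<in> free_indices d c. i = 1 \<or> i = d - 1 \<or>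
     (d = 4 \<and> i = 2 \<and> (c 1 \<notin> {None, Some 0} \<or> c 3 \<notin> {None, Some 0}))}"

(* b: Nora is to move. The parity condition says that she makes the last move; the bound
   leaves her enough moves to fill all critical indices with 0 before it. *)
definition safe_position :: "nat \<Rightarrow> bool \<Rightarrow> (nat \<Rightarrow> 'a::zero option) \<Rightarrow> bool" where
  "safe_position d b c \<longleftrightarrow> (b \<longleftrightarrow> odd (card (free_indices d c))) \<and>
     2 * card (critical_indices d c) + (if b then 1 else 2) \<le> card (free_indices d c) \<and>
     c 0 \<noteq> Some 0 \<and> c d \<noteq> Some 0"

lemma finite_free_indices [simp]: "finite (free_indices d c)"
  by (rule finite_subset[of _ "{..d}"]) (auto simp: free_indices_def)

lemma critical_indices_subset: "critical_indices d c \<subseteq> free_indices d c"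
  by (auto simp: critical_indices_def)

lemma finite_critical_indices [simp]: "finite (critical_indices d c)"
  using critical_indices_subset finite_free_indices by (rule finite_subset)

lemma finished_iff_free_indices_empty: "finished d c \<longleftrightarrow> free_indices d c = {}"
  by (auto simp: finished_def free_indices_def)

lemma legal_move_iff: "legal_move d c i v \<longleftrightarrow> i \<in> free_indices d c \<and> (i = 0 \<or> i = d \<longrightarrow> v \<noteq> 0)"
  by (auto simp: legal_move_def free_indices_def)

lemma free_indices_update:
  "i \<in> free_indices d c \<Longrightarrow> free_indices d (c(i := Some v)) = free_indices d c - {i}"
  by (auto simp: free_indices_def)

lemma critical_indices_update:
  "i \<in> free_indices d c \<Longrightarrow> critical_indices d (c(i := Some v)) \<subseteq>
     critical_indices d c - {i} \<union> (if d = 4 \<and> (i = 1 \<or> i = 3) \<and> v \<noteq> 0 then {2} else {})"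
  by (auto simp: critical_indices_def free_indices_def)

lemma card_critical_indices_update:
  assumes "i \<in> free_indices d c"
  shows "card (critical_indices d (c(i := Some v))) \<le> card (critical_indices d c)"
proof (cases "d = 4 \<and> (i = 1 \<or> i = 3) \<and> v \<noteq> 0")
  case True
  then have "i \<in> critical_indices d c"
    using assms by (auto simp: critical_indices_def)
  have "card (critical_indices d (c(i := Some v))) \<le> card (insert 2 (critical_indices d c - {i}))"
    using critical_indices_update[OF assms, of v] True by (intro card_mono) auto
  also have "\<dots> \<le> Suc (card (critical_indices d c - {i}))"
    by (simp add: card_insert_le_m1)
  also have "\<dots> = card (critical_indices d c)"
    using \<open>i \<in> critical_indices d c\<close> by (rule card_Suc_Diff1[OF finite_critical_indices])
  finally show ?thesis .
next
  case False
  then show ?thesis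
    using critical_indices_update[OF assms, of v] by (intro card_mono) auto
qed

lemma safe_position_nora_move:
  fixes c :: "nat \<Rightarrow> 'a::zero_neq_one option"
  assumes safe: "safe_position d True c" and "3 \<le> card (free_indices d c)"
  shows "\<exists>i v. legal_move d c i v \<and> safe_position d False (c(i := Some v))"
proof -
  obtain i where i: "i \<in> free_indices d c" "critical_indices d c \<noteq> {} \<Longrightarrow> i \<in> critical_indices d c"
  proof (cases "critical_indices d c = {}")
    case True
    moreover have "free_indices d c \<noteq> {}"
      using \<open>3 \<le> card (free_indices d c)\<close> by auto
    ultimately show ?thesis
      using that by blast
  next
    case False
    then show ?thesis
      using that critical_indices_subset by blast
  qed
  define v :: 'a where "v = (if i = 0 \<or> i = d then 1 else 0)"
  let ?c = "c(i := Some v)"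
  have legal: "legal_move d c i v"
    using i by (simp add: legal_move_iff v_def)
  have "critical_indices d ?c \<subseteq> critical_indices d c - {i}"
    using critical_indices_update[OF i(1), of v] by (auto simp: v_def split: if_splits)
  then have "card (critical_indices d ?c) \<le> card (critical_indices d c - {i})"
    by (intro card_mono) auto
  then have "2 * card (critical_indices d ?c) + 2 \<le> card (free_indices d c) - 1"
    using safe i \<open>3 \<le> card (free_indices d c)\<close>
    by (cases "critical_indices d c = {}") (auto simp: safe_position_def card_Diff_singleton)
  moreover have "?c 0 \<noteq> Some 0" "?c d \<noteq> Some 0"
    using safe by (auto simp: safe_position_def v_def)
  ultimately have "safe_position d False ?c"
    using safe i(1) by (auto simp: safe_position_def free_indices_update card_Diff_singleton)
  then show ?thesis
    using legal by blast
qed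

lemma safe_position_wanda_move:
  assumes safe: "safe_position d False c" and legal: "legal_move d c i v"
  shows "safe_position d True (c(i := Some v))"
proof -
  have i: "i \<in> free_indices d c"
    using legal by (simp add: legal_move_iff)
  have "card (critical_indices d (c(i := Some v))) \<le> card (critical_indices d c)"
    using i by (rule card_critical_indices_update)
  then show ?thesis
    using safe legal i
    by (auto simp: safe_position_def legal_move_iff free_indices_update card_Diff_singleton)
qed

lemma safe_position_start:
  assumes "0 < d" "d \<notin> {1, 3}" "nora_moves_last d b"
  shows "safe_position d b (\<lambda>_. None)"
proof -
  have free: "free_indices d (\<lambda>_. None) = {..d}"
    by (auto simp: free_indices_def)
  have "critical_indices d (\<lambda>_. None) \<subseteq> {1, d - 1}"
    by (auto simp: critical_indices_def)
  then have "card (critical_indices d (\<lambda>_. None)) \<le> card {1, d - 1}"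
    by (intro card_mono) auto
  moreover have "card {1, d - 1} = (if d = 2 then 1 else 2)"
    using assms(1,2) by auto
  moreover have "d = 2 \<or> 4 \<le> d \<and> (odd d \<longrightarrow> 5 \<le> d)" "b \<longleftrightarrow> odd (Suc d)"
    using assms by (auto simp: nora_moves_last_def) presburger
  ultimately show ?thesis
    by (auto simp: safe_position_def free)
qed

lemma card_free_indices_move_less:
  assumes "legal_move d c i v"
  shows "card (free_indices d (c(i := Some v))) < card (free_indices d c)"
proof -
  have "i \<in> free_indices d c"
    using assms by (simp add: legal_move_iff)
  then show ?thesis
    unfolding free_indices_update[OF \<open>i \<in> free_indices d c\<close>] by (rule card_Diff1_less[rotated]) simp
qed

lemma nora_wins_by_last_move:
  assumes "free_indices d c = {i}" "legal_move d c i v" "Goal (final_poly d (c(i := Some v)))"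
  shows "nora_wins d Goal True c"
proof (rule nora_move)
  show "\<not> finished d c"
    using assms(1) by (simp add: finished_iff_free_indices_empty)
  have "finished d (c(i := Some v))"
    using assms(1) by (simp add: finished_iff_free_indices_empty free_indices_update)
  then show "nora_wins d Goal False (c(i := Some v))"
    using assms(3) by (rule game_over)
qed (fact assms(2))

lemma nora_wins_from_safe_position:
  fixes Goal :: "'a::zero_neq_one poly \<Rightarrow> bool"
  assumes last_move: "\<And>c i. free_indices d c = {i} \<Longrightarrow> critical_indices d c = {} \<Longrightarrow>
      c 0 \<noteq> Some 0 \<Longrightarrow> c d \<noteq> Some 0 \<Longrightarrow> \<exists>v. legal_move d c i v \<and> Goal (final_poly d (c(i := Some v)))"
  shows "safe_position d b c \<Longrightarrow> nora_wins d Goal b c"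
proof (induction "card (free_indices d c)" arbitrary: b c rule: less_induct)
  case less
  have moves_left: "\<not> finished d c"
    using less.prems by (auto simp: safe_position_def finished_iff_free_indices_empty split: if_splits)
  have IH: "nora_wins d Goal b' (c(i := Some v))"
    if "legal_move d c i v" "safe_position d b' (c(i := Some v))" for i v b'
    using card_free_indices_move_less[OF that(1)] that(2) by (rule less.hyps)
  show ?case
  proof (cases b)
    case True
    show ?thesis
    proof (cases "card (free_indices d c) = 1")
      case True
      then obtain i where i: "free_indices d c = {i}"
        by (rule card_1_singletonE)
      moreover have "critical_indices d c = {}" "c 0 \<noteq> Some 0" "c d \<noteq> Some 0"
        using less.prems \<open>b\<close> True by (auto simp: safe_position_def)
      ultimately obtain v where "legal_move d c i v" "Goal (final_poly d (c(i := Some v)))"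
        using last_move by blast
      then show ?thesis
        using nora_wins_by_last_move[OF i] \<open>b\<close> by simp
    next
      case False
      moreover have "odd (card (free_indices d c))"
        using less.prems \<open>b\<close> by (simp add: safe_position_def)
      ultimately have "3 \<le> card (free_indices d c)"
        by (elim oddE) auto
      then obtain i v where "legal_move d c i v" "safe_position d False (c(i := Some v))"
        using safe_position_nora_move[of d c] less.prems \<open>b\<close> by auto
      then show ?thesis
        using \<open>b\<close> moves_left IH by (auto intro: nora_move)
    qed
  next
    case False
    have "nora_wins d Goal True (c(i := Some v))" if "legal_move d c i v" for i v
      using less.prems False by (intro IH[OF that] safe_position_wanda_move[OF _ that]) simp
    then show ?thesis
      using False moves_left by (auto intro: wanda_move)
  qed
qed

lemma coeff_final_poly: "coeff (final_poly d c) j = (if j \<le> d then the (c j) else 0)"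
  by (simp add: final_poly_def nth_default_def del: upt_Suc)

lemma final_poly_update:
  "i \<le> d \<Longrightarrow> final_poly d (c(i := Some v)) = final_poly d (c(i := Some 0)) + monom v i"
  by (rule poly_eqI) (simp add: coeff_final_poly coeff_monom)

lemma last_move_no_root:
  fixes c :: "nat \<Rightarrow> 'a::field fls option"
  assumes d: "2 \<le> d" "d \<noteq> 3" and free: "free_indices d c = {i}"
    and "critical_indices d c = {}" "c 0 \<noteq> Some 0" "c d \<noteq> Some 0"
  shows "\<exists>v. legal_move d c i v \<and> (\<forall>x. poly (map_poly fls_map_ac (final_poly d (c(i := Some v)))) x \<noteq> 0)"
proof -
  let ?p = "final_poly d (c(i := Some 0))"
  have "i \<le> d"
    using free by (auto simp: free_indices_def)
  have filled: "\<exists>a. c j = Some a" if "j \<le> d" "j \<noteq> i" for j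
    using free that by (auto simp: free_indices_def)
  have "i \<in> free_indices d c" "i \<notin> critical_indices d c"
    using free \<open>critical_indices d c = {}\<close> by auto
  then have "i \<noteq> 1" "i \<noteq> d - 1"
    and quartic: "d = 4 \<Longrightarrow> i = 2 \<Longrightarrow> c 1 \<in> {None, Some 0} \<and> c 3 \<in> {None, Some 0}"
    unfolding critical_indices_def by auto
  moreover have coeff_0: "coeff ?p 0 \<noteq> 0" if "i \<noteq> 0"
    using filled[of 0] that \<open>c 0 \<noteq> Some 0\<close> by (auto simp: coeff_final_poly)
  moreover have "coeff ?p d \<noteq> 0" if "i \<noteq> d"
    using filled[of d] that \<open>c d \<noteq> Some 0\<close> by (auto simp: coeff_final_poly)
  moreover have "coeff ?p 1 = 0 \<and> coeff ?p 3 = 0" if "d = 4" "i = 2"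
    using quartic filled[of 1] filled[of 3] that by (auto simp: coeff_final_poly)
  moreover have "degree ?p \<le> d"
    by (rule degree_le) (simp add: coeff_final_poly)
  ultimately obtain v where v: "i = 0 \<or> i = d \<longrightarrow> v \<noteq> 0" "valuation_separated (?p + monom v i)"
    using exists_coeff_valuation_separated[OF d, of ?p i] \<open>i \<le> d\<close> by (auto simp: coeff_final_poly)
  have "coeff (?p + monom v i) 0 \<noteq> 0"
    using v(1) coeff_0 by (cases "i = 0") (auto simp: coeff_final_poly)
  then have "poly (map_poly fls_map_ac (final_poly d (c(i := Some v)))) x \<noteq> 0" for x
    unfolding final_poly_update[OF \<open>i \<le> d\<close>, of c v] by (rule poly_map_ac_nonzero_if_valuation_separated[OF v(2)])
  moreover have "legal_move d c i v"
    using free v(1) by (simp add: legal_move_iff)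
  ultimately show ?thesis
    by blast
qed

theorem corollary5:
  fixes d :: nat and nora_first :: bool
    and D2 :: "'k::field alg_closure fls set"
  assumes "d > 0" and "d \<notin> {1, 3}"
    and "is_subring D2"
    and "nora_moves_last d nora_first"
  shows "nora_wins d
           (\<lambda>f :: 'k fls poly. \<not> (\<exists>x\<in>D2. poly (map_poly fls_map_ac f) x = 0))
           nora_first (\<lambda>_. None)"
proof (rule nora_wins_from_safe_position)
  show "safe_position d nora_first (\<lambda>_. None)"
    using assms(1,2,4) by (rule safe_position_start)
  have d: "2 \<le> d" "d \<noteq> 3"
    using assms(1,2) by auto
  show "\<exists>v. legal_move d c i v \<and> \<not> (\<exists>x\<in>D2. poly (map_poly fls_map_ac (final_poly d (c(i := Some v)))) x = 0)"
    if "free_indices d c = {i}" "critical_indices d c = {}" "c 0 \<noteq> Some 0" "c d \<noteq> Some 0"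
    for c :: "nat \<Rightarrow> 'k fls option" and i
    using last_move_no_root[OF d that] by blast
qed

end
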